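(* In the setting below, suppose that $x\mapsto f(x)+g(Ax)$ is bounded below and $\{x: x\in\operatorname{ri}(\operatorname{dom}f),\ Ax\in\operatorname{ri}(\operatorname{dom}g),\ Bx\le b\}\ne\emptyset$ ("$\operatorname{ri}$" omitted for polyhedral $f$ or $g$). Let $w^*=[y^*;z^*]$ be a local minimizer of $G_+^\mu(w)=\Xi(w)+\Psi_{+,\mu}(z)$ (for some $\mu>0$), let $T_*=\{i:z^*_i\ne0\}$, $\bar T_*=[r]\setminus T_*$, let $$\Omega_+:=\operatorname{argmin}_{w=[y;z]}\{\Xi(w):\ z_{\bar T_*}=0,\ z_{T_*}\ge0\},$$ and assume $w^*\in\operatorname{argmin}\{\|z\|_0:\ w=[y;z]\in\Omega_+\}$. Define $\eta_0:=\min_w\{\Xi(w): z_{\bar T_*}=0,\ z_{T_*}\ge0\}$, $\eta_1:=\min_{S\subsetneq T_*}\min_w\{\Xi(w): z_{\bar S}=0,\ z_S\ge0\}$, $\eta_2:=\min_{S\not\subseteq T_*}\min_w\{\Xi(w): z_{\bar S}=0,\ z_S\ge0\}$ (a minimum over an empty family of index sets being $+\infty$). If $\mu'\in\mathbb R^r$, $\mu'>0$, satisfies $\sum_{i\in T_*}\mu'_i\le\eta_1-\eta_0$ and $\mu'_j>\max\{\eta_1-\eta_2,0\}$ for all $j\in\bar T_*$, then $w^*$ is a global minimizer of $\Xi(w)+\Psi_{+,\mu'}(z)$.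
   Context: Let $f:\mathbb R^n\to(-\infty,\infty]$, $g:\mathbb R^m\to(-\infty,\infty]$ be proper, lsc and convex with conjugates $f^*,g^*$; $A\in\mathbb R^{m\times n}$, $B\in\mathbb R^{r\times n}$, $b\in\mathbb R^r$. For $w=[y;z]\in\mathbb R^m\times\mathbb R^r$, $\Xi(w)=f^*(-A^\top y-B^\top z)+g^*(y)+\langle b,z\rangle$; $\Psi_{+,\mu}(z)=\sum_{i=1}^r\mu_i\mathbf 1_{\{z_i\ne0\}}+\delta(z\mid\mathbb R^r_+)$. $\|z\|_0$ is the number of nonzero entries of $z$; $[r]=\{1,\dots,r\}$, $\bar S=[r]\setminus S$, $z_S$ the subvector indexed by $S$. $\operatorname{ri}$ denotes relative interior. *)

theory Defs
  imports "HOL-Analysis.Analysis"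
begin

definition epigraph :: "('a \<Rightarrow> ereal) \<Rightarrow> ('a \<times> real) set" where
  "epigraph f = {(x, t). f x \<le> ereal t}"

definition effdom :: "('a \<Rightarrow> ereal) \<Rightarrow> 'a set" where
  "effdom f = {x. f x < \<infinity>}"

definition proper_fun :: "('a \<Rightarrow> ereal) \<Rightarrow> bool" where
  "proper_fun f \<longleftrightarrow> (\<forall>x. f x \<noteq> -\<infinity>) \<and> (\<exists>x. f x < \<infinity>)"

definition convex_fun :: "('a::real_vector \<Rightarrow> ereal) \<Rightarrow> bool" where
  "convex_fun f \<longleftrightarrow> convex (epigraph f)"

definition lsc_fun :: "('a::topological_space \<Rightarrow> ereal) \<Rightarrow> bool" where
  "lsc_fun f \<longleftrightarrow> (\<forall>x. f x \<le> Liminf (at x) f)"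

definition polyhedral_fun :: "('a::euclidean_space \<Rightarrow> ereal) \<Rightarrow> bool" where
  "polyhedral_fun f \<longleftrightarrow> polyhedron (epigraph f)"

definition conj :: "('a::real_inner \<Rightarrow> ereal) \<Rightarrow> 'a \<Rightarrow> ereal" where
  "conj f u = (SUP x. ereal (u \<bullet> x) - f x)"

definition Xi :: "(real^'n \<Rightarrow> ereal) \<Rightarrow> (real^'m \<Rightarrow> ereal) \<Rightarrow> real^'n^'m \<Rightarrow> real^'n^'r
    \<Rightarrow> real^'r \<Rightarrow> real^'m \<Rightarrow> real^'r \<Rightarrow> ereal" where
  "Xi f g A B b y z = conj f (- (transpose A *v y) - (transpose B *v z)) + conj g y + ereal (b \<bullet> z)"

definition l0norm :: "real^'r \<Rightarrow> nat" where
  "l0norm z = card {i. z $ i \<noteq> 0}"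

definition Psi_plus :: "real^'r \<Rightarrow> real^'r \<Rightarrow> ereal" where
  "Psi_plus \<mu> z = (if \<forall>i. z $ i \<ge> 0 then ereal (\<Sum>i\<in>{i. z $ i \<noteq> 0}. \<mu> $ i) else \<infinity>)"

definition feas :: "'r set \<Rightarrow> ((real^'m) \<times> (real^'r)) set" where
  "feas S = {(y, z). (\<forall>i. i \<notin> S \<longrightarrow> z $ i = 0) \<and> (\<forall>i\<in>S. z $ i \<ge> 0)}"

text \<open>Infimum (the paper's min) of \<Xi> over feas S.\<close>
definition etaS :: "(real^'n \<Rightarrow> ereal) \<Rightarrow> (real^'m \<Rightarrow> ereal) \<Rightarrow> real^'n^'m \<Rightarrow> real^'n^'r
    \<Rightarrow> real^'r \<Rightarrow> 'r set \<Rightarrow> ereal" where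
  "etaS f g A B b S = (INF w\<in>feas S. Xi f g A B b (fst w) (snd w))"

end

theory Submission
  imports Defs
begin

text \<open>
  For \<open>z \<ge> 0\<close> with support \<open>S\<close>, the point \<open>(y, z)\<close> lies in \<open>feas S\<close>, so
  \<open>\<Xi>(y, z) + \<Psi>\<^sub>+\<^sub>,\<^sub>\<mu>\<^sub>'(z) \<ge> \<eta>\<^sub>S + \<mu>'(S)\<close>, with equality for \<open>w\<^sup>*\<close> and \<open>S = T\<^sub>*\<close>.
  It remains to see that \<open>T\<^sub>*\<close> minimises \<open>\<eta>\<^sub>S + \<mu>'(S)\<close>: a proper subset \<open>S\<close>
  of \<open>T\<^sub>*\<close> has \<open>\<eta>\<^sub>S \<ge> \<eta>\<^sub>1 \<ge> \<eta>\<^sub>0 + \<mu>'(T\<^sub>*)\<close>, and a set \<open>S\<close> leaving \<open>T\<^sub>*\<close> at some \<open>j\<close>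
  pays at least \<open>\<mu>'\<^sub>j > \<eta>\<^sub>1 - \<eta>\<^sub>2\<close> on top of \<open>\<eta>\<^sub>S \<ge> \<eta>\<^sub>2\<close>.
\<close>

lemma ereal_add_le_of_le_minus:
  fixes a b :: ereal
  assumes "ereal s \<le> b - a"
  shows "a + ereal s \<le> b"
  using assms by (cases a; cases b) auto

lemma ereal_le_add_of_minus_less:
  fixes a b :: ereal
  assumes "a - b < ereal s"
  shows "a \<le> b + ereal s"
  using assms by (cases a; cases b) auto

lemma value_plus_weight_le:
  fixes \<eta> :: "'a::finite set \<Rightarrow> ereal" and c :: "'a \<Rightarrow> real"
  assumes c_nonneg: "\<And>i. 0 \<le> c i"
    and gap_subsets: "ereal (sum c T) \<le> (INF S\<in>{S. S \<subset> T}. \<eta> S) - \<eta> T"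
    and gap_outside: "\<And>j. j \<notin> T \<Longrightarrow>
          (INF S\<in>{S. S \<subset> T}. \<eta> S) - (INF S\<in>{S. \<not> S \<subseteq> T}. \<eta> S) < ereal (c j)"
  shows "\<eta> T + ereal (sum c T) \<le> \<eta> S + ereal (sum c S)"
proof -
  define \<eta>\<^sub>1 where "\<eta>\<^sub>1 = (INF S\<in>{S. S \<subset> T}. \<eta> S)"
  define \<eta>\<^sub>2 where "\<eta>\<^sub>2 = (INF S\<in>{S. \<not> S \<subseteq> T}. \<eta> S)"
  have T_le_\<eta>\<^sub>1: "\<eta> T + ereal (sum c T) \<le> \<eta>\<^sub>1"
    using ereal_add_le_of_le_minus gap_subsets unfolding \<eta>\<^sub>1_def by blast
  have \<eta>_le_penalized: "\<eta> S \<le> \<eta> S + ereal (sum c S)"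
    using add_left_mono[of 0 "ereal (sum c S)" "\<eta> S"] c_nonneg by (simp add: sum_nonneg)
  consider "S = T" | "S \<subset> T" | "\<not> S \<subseteq> T" by blast
  then show ?thesis
  proof cases
    case 1
    then show ?thesis by simp
  next
    case 2
    then have "\<eta>\<^sub>1 \<le> \<eta> S" unfolding \<eta>\<^sub>1_def by (auto intro: INF_lower)
    then show ?thesis using T_le_\<eta>\<^sub>1 \<eta>_le_penalized by (meson order_trans)
  next
    case 3
    then obtain j where j: "j \<in> S" "j \<notin> T" by blast
    have "\<eta>\<^sub>1 \<le> \<eta>\<^sub>2 + ereal (c j)"
      using ereal_le_add_of_minus_less gap_outside j(2) unfolding \<eta>\<^sub>1_def \<eta>\<^sub>2_def by blast
    also have "\<dots> \<le> \<eta> S + ereal (sum c S)"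
    proof (rule add_mono)
      show "\<eta>\<^sub>2 \<le> \<eta> S" unfolding \<eta>\<^sub>2_def using 3 by (auto intro: INF_lower)
      show "ereal (c j) \<le> ereal (sum c S)"
        using j(1) c_nonneg by (simp add: member_le_sum)
    qed
    finally show ?thesis using T_le_\<eta>\<^sub>1 by (rule order_trans[rotated])
  qed
qed

lemma Psi_plus_nonneg:
  assumes "\<forall>i. 0 \<le> z $ i"
  shows "Psi_plus \<mu> z = ereal (\<Sum>i\<in>{i. z $ i \<noteq> 0}. \<mu> $ i)"
  using assms unfolding Psi_plus_def by simp

lemma feas_support:
  assumes "\<forall>i. 0 \<le> z $ i"
  shows "(y, z) \<in> feas {i. z $ i \<noteq> 0}"
  using assms unfolding feas_def by auto

lemma etaS_le_Xi:
  assumes "(y, z) \<in> feas S"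
  shows "etaS f g A B b S \<le> Xi f g A B b y z"
  unfolding etaS_def using INF_lower[OF assms, of "\<lambda>w. Xi f g A B b (fst w) (snd w)"] by simp

lemma etaS_eq_Xi_of_minimizer:
  assumes "(y, z) \<in> feas S" and "\<forall>w\<in>feas S. Xi f g A B b y z \<le> Xi f g A B b (fst w) (snd w)"
  shows "etaS f g A B b S = Xi f g A B b y z"
proof (rule antisym)
  show "etaS f g A B b S \<le> Xi f g A B b y z" using assms(1) by (rule etaS_le_Xi)
  show "Xi f g A B b y z \<le> etaS f g A B b S"
    unfolding etaS_def using assms(2) by (auto intro: INF_greatest)
qed

theorem mainTheorem18:
  fixes f :: "real^'n \<Rightarrow> ereal" and g :: "real^'m \<Rightarrow> ereal"
    and A :: "real^'n^'m" and B :: "real^'n^'r" and b :: "real^'r"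
    and \<mu> \<mu>' :: "real^'r" and ystar :: "real^'m" and zstar :: "real^'r"
  assumes f: "proper_fun f" "lsc_fun f" "convex_fun f"
    and g: "proper_fun g" "lsc_fun g" "convex_fun g"
    and bdd: "\<exists>c::real. \<forall>x. ereal c \<le> f x + g (A *v x)"
    and CQ: "\<exists>x. (if polyhedral_fun f then x \<in> effdom f else x \<in> rel_interior (effdom f))
              \<and> (if polyhedral_fun g then A *v x \<in> effdom g else A *v x \<in> rel_interior (effdom g))
              \<and> (\<forall>i. (B *v x) $ i \<le> b $ i)"
    and mu_pos: "\<forall>i. \<mu> $ i > 0"
    and locmin: "\<exists>\<epsilon>>0. \<forall>y z. dist (y, z) (ystar, zstar) < \<epsilon> \<longrightarrow>
                   Xi f g A B b ystar zstar + Psi_plus \<mu> zstar \<le> Xi f g A B b y z + Psi_plus \<mu> z"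
    and T_def: "T = {i. zstar $ i \<noteq> 0}"
    and Omega_def: "Omega = {w \<in> feas T. \<forall>w'\<in>feas T.
                       Xi f g A B b (fst w) (snd w) \<le> Xi f g A B b (fst w') (snd w')}"
    and sparsest: "(ystar, zstar) \<in> Omega" "\<forall>w\<in>Omega. l0norm zstar \<le> l0norm (snd w)"
    and eta0_def: "eta0 = etaS f g A B b T"
    and eta1_def: "eta1 = (INF S\<in>{S. S \<subset> T}. etaS f g A B b S)"
    and eta2_def: "eta2 = (INF S\<in>{S. \<not> S \<subseteq> T}. etaS f g A B b S)"
    and mu'_pos: "\<forall>i. \<mu>' $ i > 0"
    and mu'_T: "ereal (\<Sum>i\<in>T. \<mu>' $ i) \<le> eta1 - eta0"
    and mu'_Tbar: "\<forall>j. j \<notin> T \<longrightarrow> ereal (\<mu>' $ j) > max (eta1 - eta2) 0"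
  shows "\<forall>y z. Xi f g A B b ystar zstar + Psi_plus \<mu>' zstar \<le> Xi f g A B b y z + Psi_plus \<mu>' z"
proof (intro allI)
  fix y z
  let ?\<eta> = "etaS f g A B b" and ?weight = "\<lambda>S. ereal (\<Sum>i\<in>S. \<mu>' $ i)"
  have star_feas: "(ystar, zstar) \<in> feas T"
    and star_min: "\<forall>w\<in>feas T. Xi f g A B b ystar zstar \<le> Xi f g A B b (fst w) (snd w)"
    using sparsest(1) unfolding Omega_def by auto
  have star_nonneg: "\<forall>i. 0 \<le> zstar $ i"
  proof
    fix i
    show "0 \<le> zstar $ i"
      using star_feas unfolding feas_def T_def by (cases "zstar $ i = 0") auto
  qed
  have star_value: "Xi f g A B b ystar zstar + Psi_plus \<mu>' zstar = ?\<eta> T + ?weight T"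
    using etaS_eq_Xi_of_minimizer[OF star_feas star_min] Psi_plus_nonneg[OF star_nonneg]
    by (simp add: T_def)
  show "Xi f g A B b ystar zstar + Psi_plus \<mu>' zstar \<le> Xi f g A B b y z + Psi_plus \<mu>' z"
  proof (cases "\<forall>i. 0 \<le> z $ i")
    case False
    then have "Psi_plus \<mu>' z = \<infinity>" by (simp add: Psi_plus_def)
    then show ?thesis by simp
  next
    case True
    define S where "S = {i. z $ i \<noteq> 0}"
    have "?\<eta> T + ?weight T \<le> ?\<eta> S + ?weight S"
      using value_plus_weight_le[of "\<lambda>i. \<mu>' $ i" T ?\<eta>] mu'_pos mu'_T mu'_Tbar
      unfolding eta0_def eta1_def eta2_def by (simp add: less_imp_le)
    also have "\<dots> \<le> Xi f g A B b y z + Psi_plus \<mu>' z"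
      unfolding S_def Psi_plus_nonneg[OF True]
      using etaS_le_Xi[OF feas_support[OF True]] by (rule add_right_mono)
    finally show ?thesis using star_value by simp
  qed
qed

end
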